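(* Let $n\ge 4$, $N=\{1,\dots,n\}$, fix distinct $i_1,i_2\in N$ and let $\hat N^c=N\setminus\{i_1,i_2\}$. Then the inequality $$\sum_{j\in\hat N^c}\left(x_{i_1j}+x_{ji_1}+x_{ji_2}\right)-x_{i_1i_2}-\sum_{j,j'\in\hat N^c:\,j\ne j'} x_{jj'}\le 3-\frac{(n-4)(n-5)}{2}$$ defines a facet of the weak order polytope $P^n_{WO}$.
   Context: Let $N=\{1,\dots,n\}$ and $A_N=\{(i,j): i,j\in N, i\ne j\}$. A weak order on $N$ is a binary relation $W\subseteq N\times N$ that is reflexive, transitive and total; $(i,j)\in W$ is read "$i$ is preferred over or tied with $j$". The characteristic vector of $W$ is $x^W\in\{0,1\}^{A_N}$ with $x^W_{(i,j)}=1$ if $(i,j)\in W$ and $0$ otherwise. The weak order polytope $P^n_{WO}$ is the convex hull of the characteristic vectors of all weak orders on $N$; its points are vectors $x\in\mathbb{R}^{A_N}$ and $x_{ij}$ denotes the coordinate $x_{(i,j)}$. $P^n_{WO}$ has dimension $n(n-1)$. An inequality $\pi x\le\pi_0$ defines a facet of a polytope $P$ if it is valid for $P$ (holds for all $x\in P$) and the face $P\cap\{x:\pi x=\pi_0\}$ is nonempty, proper, and contains $\dim(P)$ affinely independent points. *)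

theory Defs
  imports "HOL-Analysis.Analysis"
begin

text \<open>The ground set N is modelled by a finite type 'a with CARD('a) = n.
  Points of R^{A_N} are modelled as vectors in real^('a \<times> 'a); the diagonal
  coordinates (i,i) are not in A_N and are identically 0 for every
  characteristic vector.\<close>

definition weak_order :: "('a \<times> 'a) set \<Rightarrow> bool" where
  "weak_order W \<longleftrightarrow> refl W \<and> trans W \<and> total W"

definition char_vec :: "('a::finite \<times> 'a) set \<Rightarrow> real ^ ('a \<times> 'a)" where
  "char_vec W = (\<chi> p. if fst p \<noteq> snd p \<and> p \<in> W then 1 else 0)"

definition weak_order_polytope :: "(real ^ ('a::finite \<times> 'a)) set" where
  "weak_order_polytope = convex hull {char_vec W | W. weak_order W}"

definition defines_facet ::
  "('v::real_vector) set \<Rightarrow> nat \<Rightarrow> ('v \<Rightarrow> real) \<Rightarrow> real \<Rightarrow> bool" where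
  "defines_facet P d f c \<longleftrightarrow>
     (\<forall>x\<in>P. f x \<le> c) \<and>
     (let F = P \<inter> {x. f x = c} in
        F \<noteq> {} \<and> F \<noteq> P \<and>
        (\<exists>S \<subseteq> F. finite S \<and> card S = d \<and> \<not> affine_dependent S))"

end

theory Submission
  imports Defs
begin

text \<open>
  Write N' = N - {i1, i2}, m = n - 2 and x for the characteristic vector of a weak order W.
  Let K be the set of j \<in> N' tied with i1 and k = |K|. The terms x(i1,j) + x(j,i1)
  contribute m + k; the terms x(j,i2) contribute at most m, and at most m - k unless i1 is
  weakly preferred to i2, by transitivity through K; the pairs inside N' contribute at least
  (m(m-1) + k(k-1))/2, since both directions are present inside K. As (k-1)(k-2) \<ge> 0 this
  gives the bound (5m - m^2)/2, which equals the right-hand side and is attained by the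
  linear order ranking i1 last and i2 second to last.

  For the dimension, let g be a linear functional that is constant on the tight vertices.
  Comparing pairs of tight weak orders that differ only in the ranks of four elements
  i1, i2, j, j' yields linear relations forcing g to agree off the diagonal with a multiple
  of the normal vector of the inequality. The diagonal coordinates vanish on all vertices,
  so such g form a space of dimension at most n + 1, and the tight vertices span an affine
  space of dimension at least n(n-1) - 1.
\<close>

lemma defines_facet_convex_hullI:
  fixes V E :: "'v::euclidean_space set" and a v0 v1 :: 'v
  assumes valid: "\<And>v. v \<in> V \<Longrightarrow> a \<bullet> v \<le> c"
    and v0: "v0 \<in> V" "a \<bullet> v0 = c"
    and v1: "v1 \<in> V" "a \<bullet> v1 \<noteq> c"
    and equalities: "\<And>y. (\<And>v w. v \<in> V \<Longrightarrow> w \<in> V \<Longrightarrow> a \<bullet> v = c \<Longrightarrow> a \<bullet> w = c \<Longrightarrow> y \<bullet> v = y \<bullet> w)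
                       \<Longrightarrow> y \<in> span E"
    and d: "d + dim E \<le> DIM('v) + 1"
  shows "defines_facet (convex hull V) d (\<lambda>x. a \<bullet> x) c"
proof -
  define T where "T = {v \<in> V. a \<bullet> v = c}"
  define D where "D = (\<lambda>v. v - v0) ` T"
  define Y where "Y = {y \<in> UNIV. \<forall>x \<in> span D. orthogonal x y}"
  have "dim Y + dim D = DIM('v)"
    using dim_subspace_orthogonal_to_vectors[of "span D" UNIV] by (simp add: Y_def subspace_span)
  moreover have "Y \<subseteq> span E"
  proof
    fix y assume "y \<in> Y"
    have y_v0: "y \<bullet> v = y \<bullet> v0" if "v \<in> T" for v
    proof -
      have "v \<bullet> y - v0 \<bullet> y = 0"
        using \<open>y \<in> Y\<close> that span_base[of "v - v0" D] by (auto simp: Y_def D_def orthogonal_def inner_diff_left)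
      then show ?thesis by (simp add: inner_commute)
    qed
    show "y \<in> span E"
    proof (rule equalities)
      fix v w assume "v \<in> V" "w \<in> V" "a \<bullet> v = c" "a \<bullet> w = c"
      then show "y \<bullet> v = y \<bullet> w" using y_v0[of v] y_v0[of w] by (simp add: T_def)
    qed
  qed
  then have "dim Y \<le> dim E"
    using dim_subset[of Y "span E"] by simp
  ultimately have "d \<le> dim D + 1" using d by linarith
  obtain B where B: "B \<subseteq> T" "\<not> affine_dependent B" "int (card B) = aff_dim T + 1"
    using aff_dim_inner_basis_exists[of T] by blast
  have "aff_dim T = int (dim D)"
    unfolding D_def using v0 by (intro aff_dim_eq_dim_subtract hull_inc) (simp add: T_def)
  with B(3) \<open>d \<le> dim D + 1\<close> have "d \<le> card B" by linarith
  then obtain S where S: "S \<subseteq> B" "card S = d" "finite S"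
    by (rule obtain_subset_with_card_n)
  have T_face: "T \<subseteq> convex hull V \<inter> {x. a \<bullet> x = c}"
    using hull_inc[of _ V] by (auto simp: T_def)
  show ?thesis
    unfolding defines_facet_def Let_def
  proof (intro conjI)
    have "convex hull V \<subseteq> {x. a \<bullet> x \<le> c}"
      using valid by (intro hull_minimal convex_halfspace_le) auto
    then show "\<forall>x\<in>convex hull V. a \<bullet> x \<le> c" by blast
    show "convex hull V \<inter> {x. a \<bullet> x = c} \<noteq> {}"
      using T_face v0 by (auto simp: T_def)
    show "convex hull V \<inter> {x. a \<bullet> x = c} \<noteq> convex hull V"
      using v1 hull_inc[of v1 V] by auto
    have "\<not> affine_dependent S" using B(2) S(1) by (rule affine_independent_subset)
    then show "\<exists>S'\<subseteq>convex hull V \<inter> {x. a \<bullet> x = c}. finite S' \<and> card S' = d \<and> \<not> affine_dependent S'"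
      using S B(1) T_face by (intro exI[of _ S]) auto
  qed
qed

lemma obtain_fresh:
  fixes A :: "'a::finite set"
  assumes "card A < CARD('a)"
  obtains x where "x \<notin> A"
  using assms by (metis UNIV_I card_mono finite not_le subsetI)

definition offdiag :: "'a set \<Rightarrow> ('a \<times> 'a) set" where
  "offdiag A = {(u, v). u \<in> A \<and> v \<in> A \<and> u \<noteq> v}"

lemma card_offdiag:
  assumes "finite A"
  shows "card (offdiag A) = card A * (card A - 1)"
proof -
  have "offdiag A = A \<times> A - (\<lambda>u. (u, u)) ` A" by (auto simp: offdiag_def)
  moreover have "card ((\<lambda>u. (u, u)) ` A) = card A" by (rule card_image) (auto simp: inj_on_def)
  ultimately show ?thesis
    using assms by (simp add: card_Diff_subset card_cartesian_product diff_mult_distrib2 image_subset_iff)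
qed

lemma sum_offdiag_swap: "(\<Sum>p\<in>offdiag A. h (snd p, fst p)) = sum h (offdiag A)"
  by (rule sum.reindex_bij_witness[where i = prod.swap and j = prod.swap]) (auto simp: offdiag_def)

lemma char_vec_add_swap:
  assumes "weak_order W" "u \<noteq> v"
  shows "char_vec W $ (u, v) + char_vec W $ (v, u) = (if (u, v) \<in> W \<and> (v, u) \<in> W then 2 else 1)"
  using assms by (auto simp: char_vec_def weak_order_def total_on_def)

lemma sum_offdiag_char_vec:
  assumes "weak_order W" "finite A"
  shows "2 * (\<Sum>p\<in>offdiag A. char_vec W $ p) = card (offdiag A) + card (offdiag A \<inter> W \<inter> W\<inverse>)"
proof -
  have "2 * (\<Sum>p\<in>offdiag A. char_vec W $ p) = (\<Sum>p\<in>offdiag A. char_vec W $ p + char_vec W $ (snd p, fst p))"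
    by (simp add: sum.distrib sum_offdiag_swap)
  also have "\<dots> = (\<Sum>p\<in>offdiag A. 1 + (if p \<in> W \<inter> W\<inverse> then 1 else 0))"
    using assms(1) by (intro sum.cong) (auto simp: offdiag_def char_vec_add_swap split: if_split_asm)
  also have "\<dots> = card (offdiag A) + card (offdiag A \<inter> W \<inter> W\<inverse>)"
    using assms(2) by (simp add: sum.distrib sum.If_cases card_offdiag Int_assoc Collect_conj_eq)
  finally show ?thesis .
qed

lemma sum_offdiag_char_vec_ge:
  fixes W :: "('a::finite \<times> 'a) set"
  assumes "weak_order W" "K \<subseteq> A" "K \<times> K \<subseteq> W"
  shows "real (card A * (card A - 1)) + real (card K * (card K - 1)) \<le> 2 * (\<Sum>p\<in>offdiag A. char_vec W $ p)"
proof -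
  have "card (offdiag K) \<le> card (offdiag A \<inter> W \<inter> W\<inverse>)"
    using assms(2,3) by (intro card_mono) (auto simp: offdiag_def)
  then have "real (card K * (card K - 1)) \<le> card (offdiag A \<inter> W \<inter> W\<inverse>)"
    by (metis card_offdiag[OF finite] of_nat_le_iff)
  then show ?thesis
    using sum_offdiag_char_vec[OF assms(1) finite, of A] card_offdiag[OF finite, of A] by simp
qed

lemma card_UNIV_minus_pair:
  fixes i1 i2 :: "'a::finite"
  assumes "i1 \<noteq> i2"
  shows "CARD('a) = card (UNIV - {i1, i2}) + 2"
  using assms card_mono[of UNIV "{i1, i2}"] by (simp add: card_Diff_subset)

definition facet_lhs :: "'a::finite \<Rightarrow> 'a \<Rightarrow> real ^ ('a \<times> 'a) \<Rightarrow> real" where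
  "facet_lhs i1 i2 x = (\<Sum>j\<in>UNIV - {i1, i2}. x $ (i1, j) + x $ (j, i1) + x $ (j, i2))
     - x $ (i1, i2) - (\<Sum>p\<in>offdiag (UNIV - {i1, i2}). x $ p)"

definition facet_rhs :: "nat \<Rightarrow> real" where
  "facet_rhs n = 3 - (real n - 4) * (real n - 5) / 2"

lemma facet_rhs_bound:
  fixes m k :: nat and s t X :: real
  assumes "X = 0 \<or> X = 1" and "s \<le> 2 * real m + real k - (1 - X) * real k"
    and "real (m * (m - 1)) + real (k * (k - 1)) \<le> 2 * t"
  shows "s - X - t \<le> facet_rhs (m + 2)"
proof -
  have "real (m * (m - 1)) = real m * real m - real m" "real (k * (k - 1)) = real k * real k - real k"
    by (cases m; cases k; simp add: algebra_simps)+
  moreover have "(real k - 1) * (real k - 2) \<ge> 0"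
    by (cases "k \<le> 1") (auto simp: le_Suc_eq)
  moreover have "real k \<le> real k * real k"
    by (cases k) auto
  ultimately show ?thesis
    using assms by (auto simp: facet_rhs_def field_simps)
qed

lemma facet_lhs_char_vec_le:
  fixes i1 i2 :: "'a::finite"
  assumes W: "weak_order W" and "i1 \<noteq> i2"
  shows "facet_lhs i1 i2 (char_vec W) \<le> facet_rhs CARD('a)"
proof -
  define x where "x = char_vec W"
  define N' where "N' = UNIV - {i1, i2}"
  define K where "K = {j \<in> N'. (i1, j) \<in> W \<and> (j, i1) \<in> W}"
  define X where "X = x $ (i1, i2)"
  have K: "K \<subseteq> N'" by (auto simp: K_def)
  have m: "CARD('a) = card N' + 2"
    using card_UNIV_minus_pair[OF \<open>i1 \<noteq> i2\<close>] by (simp add: N'_def)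
  have tr: "(u, w) \<in> W" if "(u, v) \<in> W" "(v, w) \<in> W" for u v w
    using W that unfolding weak_order_def trans_def by blast
  have "(\<Sum>j\<in>N'. x $ (i1, j) + x $ (j, i1)) = (\<Sum>j\<in>N'. 1 + (if j \<in> K then 1 else 0))"
    using W by (intro sum.cong) (auto simp: x_def N'_def K_def char_vec_add_swap)
  also have "\<dots> = card N' + card K"
    using K by (simp add: sum.distrib sum.If_cases Int_absorb1)
  finally have s1: "(\<Sum>j\<in>N'. x $ (i1, j) + x $ (j, i1)) = card N' + card K" .
  have s2: "(\<Sum>j\<in>N'. x $ (j, i2)) \<le> card N' - (1 - X) * card K"
  proof (cases "X = 1")
    case True
    have "(\<Sum>j\<in>N'. x $ (j, i2)) \<le> (\<Sum>j\<in>N'. 1)"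
      by (intro sum_mono) (simp add: x_def char_vec_def)
    then show ?thesis using True by simp
  next
    case False
    then have "(i1, i2) \<notin> W" using \<open>i1 \<noteq> i2\<close> by (auto simp: X_def x_def char_vec_def split: if_split_asm)
    then have "(\<Sum>j\<in>N'. x $ (j, i2)) \<le> (\<Sum>j\<in>N'. 1 - (if j \<in> K then 1 else 0))"
      using tr[of i1 _ i2] by (intro sum_mono) (auto simp: x_def char_vec_def K_def)
    also have "\<dots> = card N' - real (card K)"
      using K by (simp add: sum_subtractf sum.If_cases Int_absorb1)
    finally show ?thesis using False by (simp add: X_def x_def char_vec_def)
  qed
  have "K \<times> K \<subseteq> W"
    using tr by (auto simp: K_def)
  with K(1) have s3: "real (card N' * (card N' - 1)) + real (card K * (card K - 1)) \<le> 2 * (\<Sum>p\<in>offdiag N'. x $ p)"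
    unfolding x_def by (rule sum_offdiag_char_vec_ge[OF W])
  have "X = 0 \<or> X = 1" by (simp add: X_def x_def char_vec_def)
  moreover have "(\<Sum>j\<in>N'. x $ (i1, j) + x $ (j, i1)) + (\<Sum>j\<in>N'. x $ (j, i2))
      \<le> 2 * real (card N') + real (card K) - (1 - X) * real (card K)"
    using s1 s2 by linarith
  ultimately have "(\<Sum>j\<in>N'. x $ (i1, j) + x $ (j, i1)) + (\<Sum>j\<in>N'. x $ (j, i2)) - X
      - (\<Sum>p\<in>offdiag N'. x $ p) \<le> facet_rhs CARD('a)"
    unfolding m by (rule facet_rhs_bound[OF _ _ s3])
  then show ?thesis
    by (simp add: facet_lhs_def x_def N'_def X_def sum.distrib)
qed

definition facet_normal :: "'a::finite \<Rightarrow> 'a \<Rightarrow> real ^ ('a \<times> 'a)" where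
  "facet_normal i1 i2 = (\<chi> p. case p of (u, v) \<Rightarrow>
     if u = v \<or> u = i2 then 0
     else if u = i1 then (if v = i2 then -1 else 1)
     else if v = i1 \<or> v = i2 then 1 else -1)"

lemma facet_normal_nth:
  "facet_normal i1 i2 $ (u, v) =
     (if u = v \<or> u = i2 then 0 else if u = i1 then (if v = i2 then -1 else 1)
      else if v = i1 \<or> v = i2 then 1 else -1)"
  by (simp add: facet_normal_def)

lemma sum_nth_eq_inner_indicator:
  fixes x :: "real ^ 'n"
  shows "(\<Sum>p\<in>S. x $ p) = (\<chi> p. indicator S p) \<bullet> x"
proof -
  have "(\<chi> p. indicator S p) \<bullet> x = (\<Sum>p\<in>UNIV. if p \<in> S then x $ p else 0)"
    unfolding inner_vec_def by (intro sum.cong) (auto simp: indicator_def)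
  also have "\<dots> = (\<Sum>p\<in>S. x $ p)"
    by (simp add: sum.inter_restrict[symmetric])
  finally show ?thesis by simp
qed

lemma facet_normal_eq_indicators:
  fixes i1 i2 :: "'a::finite"
  assumes "i1 \<noteq> i2"
  defines "N' \<equiv> UNIV - {i1, i2}"
  shows "facet_normal i1 i2 = (\<chi> p. indicator ({i1} \<times> N') p) + (\<chi> p. indicator (N' \<times> {i1}) p)
    + (\<chi> p. indicator (N' \<times> {i2}) p) - (\<chi> p. indicator {(i1, i2)} p) - (\<chi> p. indicator (offdiag N') p)"
  using assms(1) by (auto simp: vec_eq_iff facet_normal_def N'_def offdiag_def indicator_def)

lemma facet_lhs_eq_inner:
  assumes "i1 \<noteq> i2"
  shows "facet_lhs i1 i2 x = facet_normal i1 i2 \<bullet> x"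
proof -
  define N' where "N' = UNIV - {i1, i2}"
  have "facet_lhs i1 i2 x = (\<Sum>j\<in>N'. x $ (i1, j)) + (\<Sum>j\<in>N'. x $ (j, i1)) + (\<Sum>j\<in>N'. x $ (j, i2))
      - x $ (i1, i2) - (\<Sum>p\<in>offdiag N'. x $ p)"
    unfolding facet_lhs_def N'_def sum.distrib ..
  also have "\<dots> = (\<Sum>p\<in>{i1} \<times> N'. x $ p) + (\<Sum>p\<in>N' \<times> {i1}. x $ p)
      + (\<Sum>p\<in>N' \<times> {i2}. x $ p) - (\<Sum>p\<in>{(i1, i2)}. x $ p) - (\<Sum>p\<in>offdiag N'. x $ p)"
    by (simp add: sum.cartesian_product')
  also have "\<dots> = facet_normal i1 i2 \<bullet> x"
    unfolding sum_nth_eq_inner_indicator inner_add_left[symmetric] inner_diff_left[symmetric]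
      facet_normal_eq_indicators[OF assms] N'_def ..
  finally show ?thesis .
qed

definition rank_order :: "('a \<Rightarrow> nat) \<Rightarrow> ('a \<times> 'a) set" where
  "rank_order R = {(u, v). R v \<le> R u}"

lemma weak_order_rank_order: "weak_order (rank_order R)"
  by (auto simp: weak_order_def rank_order_def refl_on_def trans_def total_on_def)

lemma char_vec_rank_order: "char_vec (rank_order R) $ (u, v) = (if u \<noteq> v \<and> R v \<le> R u then 1 else 0)"
  by (simp add: char_vec_def rank_order_def)

lemma inner_char_vec_rank_order_diff:
  fixes g :: "real ^ ('a::finite \<times> 'a)"
  assumes "\<And>u. u \<notin> Q \<Longrightarrow> R u = R' u"
    and "\<And>u v. u \<in> Q \<Longrightarrow> v \<notin> Q \<Longrightarrow> R u < R v \<and> R' u < R' v"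
  shows "g \<bullet> char_vec (rank_order R) - g \<bullet> char_vec (rank_order R') =
    (\<Sum>u\<in>Q. \<Sum>v\<in>Q. g $ (u, v) * ((if u \<noteq> v \<and> R v \<le> R u then 1 else 0) - (if u \<noteq> v \<and> R' v \<le> R' u then 1 else 0)))"
proof -
  define h where "h p = g $ p * (char_vec (rank_order R) $ p - char_vec (rank_order R') $ p)" for p
  have "g \<bullet> char_vec (rank_order R) - g \<bullet> char_vec (rank_order R') = sum h UNIV"
    by (simp add: h_def inner_vec_def sum_subtractf algebra_simps)
  also have "\<dots> = sum h (Q \<times> Q)"
  proof (rule sum.mono_neutral_right)
    show "\<forall>p\<in>UNIV - Q \<times> Q. h p = 0"
    proof
      fix p assume "p \<in> UNIV - Q \<times> Q"
      then obtain u v where "p = (u, v)" "u \<notin> Q \<or> v \<notin> Q" by (cases p) auto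
      then show "h p = 0"
        using assms(2)[of u v] assms(2)[of v u] assms(1)[of u] assms(1)[of v]
        by (cases "u \<in> Q"; cases "v \<in> Q") (auto simp: h_def char_vec_rank_order)
    qed
  qed auto
  finally show ?thesis
    by (simp add: sum.cartesian_product' h_def char_vec_rank_order)
qed

lemma facet_lhs_strict_rank:
  fixes i1 i2 :: "'a::finite" and R :: "'a \<Rightarrow> nat"
  assumes "inj R" "R i1 < R i2" "\<And>j. j \<notin> {i1, i2} \<Longrightarrow> R i2 < R j"
  shows "facet_lhs i1 i2 (char_vec (rank_order R)) = facet_rhs CARD('a)"
proof -
  define x where "x = char_vec (rank_order R)"
  define N' where "N' = UNIV - {i1, i2}"
  have "i1 \<noteq> i2" using assms(2) by auto
  have m: "CARD('a) = card N' + 2"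
    using card_UNIV_minus_pair[OF \<open>i1 \<noteq> i2\<close>] by (simp add: N'_def)
  have "(\<Sum>j\<in>N'. x $ (i1, j) + x $ (j, i1) + x $ (j, i2)) = (\<Sum>j\<in>N'. 2)"
  proof (rule sum.cong)
    fix j assume "j \<in> N'"
    then have "j \<noteq> i1" "j \<noteq> i2" "R i2 < R j"
      using assms(3)[of j] by (auto simp: N'_def)
    with assms(2) show "x $ (i1, j) + x $ (j, i1) + x $ (j, i2) = 2"
      by (simp add: x_def char_vec_rank_order)
  qed simp
  moreover have "x $ (i1, i2) = 0"
    using assms(2) by (simp add: x_def char_vec_rank_order)
  moreover have "offdiag N' \<inter> rank_order R \<inter> (rank_order R)\<inverse> = {}"
    using assms(1) by (auto simp: offdiag_def rank_order_def inj_def)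
  then have "2 * (\<Sum>p\<in>offdiag N'. x $ p) = card N' * (card N' - 1)"
    using sum_offdiag_char_vec[OF weak_order_rank_order, of N' R] card_offdiag[of N'] by (simp add: x_def)
  ultimately show ?thesis
    unfolding facet_lhs_def x_def[symmetric] N'_def[symmetric] facet_rhs_def m
    by (cases "card N'") (auto simp: field_simps)
qed

text \<open>The elements other than i1, i2, j, j' are ranked above these four and strictly
  ordered among themselves, so two block rankings differ only on the 4 \<times> 4 block.\<close>

definition block_rank :: "'a::countable \<Rightarrow> 'a \<Rightarrow> 'a \<Rightarrow> 'a \<Rightarrow> nat \<Rightarrow> nat \<Rightarrow> nat \<Rightarrow> nat \<Rightarrow> 'a \<Rightarrow> nat" where
  "block_rank i1 i2 j j' a b c d u =
     (if u = i1 then a else if u = i2 then b else if u = j then c else if u = j' then d else 4 + to_nat u)"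

abbreviation block_vertex :: "'a::finite \<Rightarrow> 'a \<Rightarrow> 'a \<Rightarrow> 'a \<Rightarrow> nat \<Rightarrow> nat \<Rightarrow> nat \<Rightarrow> nat \<Rightarrow> real ^ ('a \<times> 'a)" where
  "block_vertex i1 i2 j j' a b c d \<equiv> char_vec (rank_order (block_rank i1 i2 j j' a b c d))"

lemma block_rank_simps:
  assumes "distinct [i1, i2, j, j']"
  shows "block_rank i1 i2 j j' a b c d i1 = a" "block_rank i1 i2 j j' a b c d i2 = b"
    "block_rank i1 i2 j j' a b c d j = c" "block_rank i1 i2 j j' a b c d j' = d"
  using assms by (auto simp: block_rank_def)

lemma inner_block_vertex_diff:
  fixes g :: "real ^ ('a::finite \<times> 'a)" and i1 i2 j j' :: 'a
  assumes "a \<le> 3" "b \<le> 3" "c \<le> 3" "d \<le> 3" "a' \<le> 3" "b' \<le> 3" "c' \<le> 3" "d' \<le> 3"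
  defines "R \<equiv> block_rank i1 i2 j j' a b c d" and "R' \<equiv> block_rank i1 i2 j j' a' b' c' d'"
  shows "g \<bullet> char_vec (rank_order R) - g \<bullet> char_vec (rank_order R') =
    (\<Sum>u\<in>{i1, i2, j, j'}. \<Sum>v\<in>{i1, i2, j, j'}. g $ (u, v) *
       ((if u \<noteq> v \<and> R v \<le> R u then 1 else 0) - (if u \<noteq> v \<and> R' v \<le> R' u then 1 else 0)))"
  by (rule inner_char_vec_rank_order_diff) (use assms in \<open>auto simp: block_rank_def\<close>)

lemma facet_lhs_block_vertex_0123:
  fixes i1 i2 :: "'a::finite"
  assumes "distinct [i1, i2, j, j']"
  shows "facet_lhs i1 i2 (block_vertex i1 i2 j j' 0 1 2 3) = facet_rhs CARD('a)"
proof (rule facet_lhs_strict_rank)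
  show "inj (block_rank i1 i2 j j' 0 1 2 3)"
    using assms by (auto simp: inj_def block_rank_def split: if_splits)
qed (use assms in \<open>auto simp: block_rank_def\<close>)

context
  fixes i1 i2 :: "'a::finite" and g :: "real ^ ('a \<times> 'a)"
  assumes g_const_on_tight: "\<And>W W'. weak_order W \<Longrightarrow> weak_order W' \<Longrightarrow>
      facet_normal i1 i2 \<bullet> char_vec W = facet_rhs CARD('a) \<Longrightarrow>
      facet_normal i1 i2 \<bullet> char_vec W' = facet_rhs CARD('a) \<Longrightarrow> g \<bullet> char_vec W = g \<bullet> char_vec W'"
begin

lemma tight_block_vertex_eq:
  assumes dist: "distinct [i1, i2, j, j']"
    and "a \<le> 3" "b \<le> 3" "c \<le> 3" "d \<le> 3" "a' \<le> 3" "b' \<le> 3" "c' \<le> 3" "d' \<le> 3"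
    and tight: "facet_normal i1 i2 \<bullet> block_vertex i1 i2 j j' a b c d
                 - facet_normal i1 i2 \<bullet> block_vertex i1 i2 j j' 0 1 2 3 = 0"
      "facet_normal i1 i2 \<bullet> block_vertex i1 i2 j j' a' b' c' d'
                 - facet_normal i1 i2 \<bullet> block_vertex i1 i2 j j' 0 1 2 3 = 0"
  shows "g \<bullet> block_vertex i1 i2 j j' a b c d - g \<bullet> block_vertex i1 i2 j j' a' b' c' d' = 0"
proof -
  have "i1 \<noteq> i2" using dist by simp
  then have "facet_normal i1 i2 \<bullet> block_vertex i1 i2 j j' 0 1 2 3 = facet_rhs CARD('a)"
    by (metis facet_lhs_block_vertex_0123[OF dist] facet_lhs_eq_inner)
  with tight have "facet_normal i1 i2 \<bullet> block_vertex i1 i2 j j' a b c d = facet_rhs CARD('a)"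
    "facet_normal i1 i2 \<bullet> block_vertex i1 i2 j j' a' b' c' d' = facet_rhs CARD('a)"
    by linarith+
  then have "g \<bullet> block_vertex i1 i2 j j' a b c d = g \<bullet> block_vertex i1 i2 j j' a' b' c' d'"
    by (rule g_const_on_tight[OF weak_order_rank_order weak_order_rank_order])
  then show ?thesis by simp
qed

lemma tight_equations:
  assumes dist: "distinct [i1, i2, j, j']"
  shows "g $ (j, j') = g $ (j', j)"
    and "g $ (i2, j) = 0"
    and "g $ (i1, j) + g $ (i2, j) = g $ (j, i2)"
    and "g $ (i1, j') + g $ (j, j') = 0"
    and "g $ (i1, j) + g $ (j', j) = g $ (j, i1) + g $ (j, j')"
    and "g $ (i2, i1) + g $ (i2, j) = 0"
    and "g $ (i1, i2) + g $ (j, i2) = g $ (i2, i1) + g $ (i2, j)"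
proof -
  note simps = inner_block_vertex_diff block_rank_simps[OF dist] facet_normal_nth
  have neq: "i1 \<noteq> i2" "i1 \<noteq> j" "i1 \<noteq> j'" "i2 \<noteq> j" "i2 \<noteq> j'" "j \<noteq> j'"
      "i2 \<noteq> i1" "j \<noteq> i1" "j' \<noteq> i1" "j \<noteq> i2" "j' \<noteq> i2" "j' \<noteq> j"
    using dist by auto
  have "g \<bullet> block_vertex i1 i2 j j' 0 1 2 3 - g \<bullet> block_vertex i1 i2 j j' 0 1 3 2 = 0"
    by (rule tight_block_vertex_eq[OF dist]) (simp_all add: simps neq)
  then show "g $ (j, j') = g $ (j', j)" by (simp add: simps neq algebra_simps)
  have "g \<bullet> block_vertex i1 i2 j j' 0 1 2 3 - g \<bullet> block_vertex i1 i2 j j' 0 1 1 3 = 0"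
    by (rule tight_block_vertex_eq[OF dist]) (simp_all add: simps neq)
  then show "g $ (i2, j) = 0" by (simp add: simps neq algebra_simps)
  have "g \<bullet> block_vertex i1 i2 j j' 0 1 2 3 - g \<bullet> block_vertex i1 i2 j j' 0 1 0 3 = 0"
    by (rule tight_block_vertex_eq[OF dist]) (simp_all add: simps neq)
  then show "g $ (i1, j) + g $ (i2, j) = g $ (j, i2)" by (simp add: simps neq algebra_simps)
  have "g \<bullet> block_vertex i1 i2 j j' 1 0 1 2 - g \<bullet> block_vertex i1 i2 j j' 1 0 1 1 = 0"
    by (rule tight_block_vertex_eq[OF dist]) (simp_all add: simps neq)
  then show "g $ (i1, j') + g $ (j, j') = 0" by (simp add: simps neq algebra_simps)
  have "g \<bullet> block_vertex i1 i2 j j' 2 0 1 2 - g \<bullet> block_vertex i1 i2 j j' 1 0 2 1 = 0"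
    by (rule tight_block_vertex_eq[OF dist]) (simp_all add: simps neq)
  then show "g $ (i1, j) + g $ (j', j) = g $ (j, i1) + g $ (j, j')" by (simp add: simps neq algebra_simps)
  have "g \<bullet> block_vertex i1 i2 j j' 1 0 1 2 - g \<bullet> block_vertex i1 i2 j j' 0 0 0 2 = 0"
    by (rule tight_block_vertex_eq[OF dist]) (simp_all add: simps neq)
  then show "g $ (i2, i1) + g $ (i2, j) = 0" by (simp add: simps neq algebra_simps)
  have "g \<bullet> block_vertex i1 i2 j j' 1 0 1 2 - g \<bullet> block_vertex i1 i2 j j' 0 1 0 2 = 0"
    by (rule tight_block_vertex_eq[OF dist]) (simp_all add: simps neq)
  then show "g $ (i1, i2) + g $ (j, i2) = g $ (i2, i1) + g $ (i2, j)" by (simp add: simps neq algebra_simps)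
qed

lemma tight_coefficients:
  assumes "i1 \<noteq> i2" "CARD('a) \<ge> 4" "j0 \<notin> {i1, i2}" "u \<noteq> v"
  shows "g $ (u, v) = g $ (i1, j0) * facet_normal i1 i2 $ (u, v)"
proof -
  define \<mu> where "\<mu> = g $ (i1, j0)"
  have partner: "\<exists>j'. distinct [i1, i2, j, j']" if "j \<notin> {i1, i2}" for j
  proof -
    have "card {i1, i2, j} < CARD('a)"
      using assms(2) by (simp add: card_insert_if)
    then obtain j' where "j' \<notin> {i1, i2, j}" by (rule obtain_fresh)
    with that assms(1) show ?thesis by auto
  qed
  have row: "g $ (i1, j) = \<mu>" if "j \<notin> {i1, i2}" for j
  proof (cases "j = j0")
    case False
    then have "distinct [i1, i2, j0, j]" "distinct [i1, i2, j, j0]"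
      using that assms(1,3) by auto
    from tight_equations(4)[OF this(1)] tight_equations(4)[OF this(2)] tight_equations(1)[OF this(1)]
    show ?thesis by (simp add: \<mu>_def)
  qed (simp add: \<mu>_def)
  have column: "g $ (i2, j) = 0 \<and> g $ (j, i1) = \<mu> \<and> g $ (j, i2) = \<mu>
      \<and> g $ (i2, i1) = 0 \<and> g $ (i1, i2) = - \<mu>" if j: "j \<notin> {i1, i2}" for j
  proof -
    obtain j' where "distinct [i1, i2, j, j']" using partner[OF j] by blast
    from tight_equations[OF this] row[OF j] show ?thesis by auto
  qed
  have inner: "g $ (j, j') = - \<mu>" if "j \<notin> {i1, i2}" "j' \<notin> {i1, i2}" "j \<noteq> j'" for j j'
    using tight_equations(4)[of j j'] row[OF that(2)] that assms(1) by auto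
  show ?thesis
    using column[OF assms(3)] column inner row assms(1,4)
    by (cases "u = i1"; cases "u = i2"; cases "v = i1"; cases "v = i2")
      (simp_all add: facet_normal_nth \<mu>_def)
qed

lemma tight_span:
  assumes "i1 \<noteq> i2" "CARD('a) \<ge> 4"
  shows "g \<in> span (insert (facet_normal i1 i2) (range (\<lambda>u. axis (u, u) 1)))" (is "_ \<in> span ?E")
proof -
  have "card {i1, i2} < CARD('a)"
    using assms(2) by (simp add: card_insert_if)
  then obtain j0 where j0: "j0 \<notin> {i1, i2}" by (rule obtain_fresh)
  define h where "h = g - g $ (i1, j0) *\<^sub>R facet_normal i1 i2"
  have "h $ p *s axis p 1 \<in> span ?E" for p
  proof (cases "fst p = snd p")
    case True
    then have "axis p 1 \<in> ?E" by (cases p) auto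
    then show ?thesis by (simp add: scalar_mult_eq_scaleR span_base span_scale)
  next
    case False
    then have "h $ p = 0"
      using tight_coefficients[OF assms j0, of "fst p" "snd p"] by (simp add: h_def)
    then show ?thesis by (simp add: span_zero)
  qed
  then have "h \<in> span ?E"
    using span_sum[of UNIV "\<lambda>p. h $ p *s axis p 1"] basis_expansion[of h] by simp
  moreover have "g = h + g $ (i1, j0) *\<^sub>R facet_normal i1 i2"
    by (simp add: h_def)
  ultimately show ?thesis
    by (metis insertI1 span_add span_base span_scale)
qed

end

lemma dim_insert_diagonal_axes:
  fixes a :: "real ^ ('a::finite \<times> 'a)"
  shows "dim (insert a (range (\<lambda>u. axis (u, u) 1))) \<le> CARD('a) + 1"
proof -
  have "dim (insert a (range (\<lambda>u. axis (u, u) 1))) \<le> card (insert a (range (\<lambda>u. axis (u, u) (1::real))))"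
    by (rule dim_le_card[OF span_superset]) simp
  also have "\<dots> \<le> CARD('a) + 1"
    using card_image_le[of "UNIV :: 'a set" "\<lambda>u. axis (u, u) (1::real)"] by (simp add: card_insert_if)
  finally show ?thesis .
qed

lemma facet_lhs_defines_facet:
  fixes i1 i2 :: "'a::finite"
  assumes n4: "CARD('a) \<ge> 4" and i12: "i1 \<noteq> i2"
  shows "defines_facet (weak_order_polytope :: (real ^ ('a \<times> 'a)) set)
           (CARD('a) * (CARD('a) - 1)) (facet_lhs i1 i2) (facet_rhs CARD('a))"
proof -
  have "card {i1, i2} < CARD('a)"
    using n4 by (simp add: card_insert_if)
  then obtain j where j: "j \<notin> {i1, i2}" by (rule obtain_fresh)
  have "card {i1, i2, j} < CARD('a)"
    using n4 by (simp add: card_insert_if)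
  then obtain j' where j': "j' \<notin> {i1, i2, j}" by (rule obtain_fresh)
  have dist: "distinct [i1, i2, j, j']" using i12 j j' by auto
  define V where "V = {char_vec W | W :: ('a \<times> 'a) set. weak_order W}"
  define E where "E = insert (facet_normal i1 i2) (range (\<lambda>u. axis (u, u) (1::real)))"
  have lhs: "facet_lhs i1 i2 = (\<lambda>x. facet_normal i1 i2 \<bullet> x)"
    using facet_lhs_eq_inner[OF i12] by blast
  have dim_E: "CARD('a) * (CARD('a) - 1) + dim E \<le> DIM(real ^ ('a \<times> 'a)) + 1"
    using dim_insert_diagonal_axes[of "facet_normal i1 i2"] n4
    by (cases "CARD('a)") (auto simp: E_def algebra_simps)
  have tight: "facet_normal i1 i2 \<bullet> block_vertex i1 i2 j j' 0 1 2 3 = facet_rhs CARD('a)"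
    using facet_lhs_block_vertex_0123[OF dist] by (simp add: lhs)
  have "facet_normal i1 i2 \<bullet> block_vertex i1 i2 j j' 1 0 2 3
      - facet_normal i1 i2 \<bullet> block_vertex i1 i2 j j' 0 1 2 3 = -1"
    using dist by (simp add: inner_block_vertex_diff block_rank_simps[OF dist] facet_normal_nth)
  with tight have loose: "facet_normal i1 i2 \<bullet> block_vertex i1 i2 j j' 1 0 2 3 \<noteq> facet_rhs CARD('a)"
    by linarith
  have "defines_facet (convex hull V) (CARD('a) * (CARD('a) - 1))
      (\<lambda>x. facet_normal i1 i2 \<bullet> x) (facet_rhs CARD('a))"
  proof (rule defines_facet_convex_hullI[OF _ _ tight _ loose _ dim_E])
    show "facet_normal i1 i2 \<bullet> v \<le> facet_rhs CARD('a)" if "v \<in> V" for v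
      using that facet_lhs_char_vec_le[OF _ i12] by (auto simp: V_def lhs)
    show "block_vertex i1 i2 j j' 0 1 2 3 \<in> V" "block_vertex i1 i2 j j' 1 0 2 3 \<in> V"
      unfolding V_def using weak_order_rank_order by blast+
    show "y \<in> span E" if "\<And>v w. v \<in> V \<Longrightarrow> w \<in> V \<Longrightarrow> facet_normal i1 i2 \<bullet> v = facet_rhs CARD('a) \<Longrightarrow>
        facet_normal i1 i2 \<bullet> w = facet_rhs CARD('a) \<Longrightarrow> y \<bullet> v = y \<bullet> w" for y
      unfolding E_def by (rule tight_span[OF _ i12 n4]) (rule that; auto simp: V_def)
  qed
  then show ?thesis
    unfolding lhs weak_order_polytope_def V_def .
qed

theorem mainTheorem11:
  fixes i1 i2 :: "'a::finite"
  assumes "CARD('a) \<ge> 4" and "i1 \<noteq> i2"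
  shows "defines_facet (weak_order_polytope :: (real ^ ('a \<times> 'a)) set)
           (CARD('a) * (CARD('a) - 1))
           (\<lambda>x. (\<Sum>j\<in>UNIV - {i1, i2}. x $ (i1, j) + x $ (j, i1) + x $ (j, i2))
                 - x $ (i1, i2)
                 - (\<Sum>p\<in>{(j, j'). j \<in> UNIV - {i1, i2} \<and> j' \<in> UNIV - {i1, i2} \<and> j \<noteq> j'}. x $ p))
           (3 - (real CARD('a) - 4) * (real CARD('a) - 5) / 2)"
proof -
  have "facet_lhs i1 i2 = (\<lambda>x. (\<Sum>j\<in>UNIV - {i1, i2}. x $ (i1, j) + x $ (j, i1) + x $ (j, i2))
                 - x $ (i1, i2)
                 - (\<Sum>p\<in>{(j, j'). j \<in> UNIV - {i1, i2} \<and> j' \<in> UNIV - {i1, i2} \<and> j \<noteq> j'}. x $ p))"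
    by (simp add: fun_eq_iff facet_lhs_def offdiag_def)
  with facet_lhs_defines_facet[OF assms] show ?thesis
    by (simp only: facet_rhs_def)
qed

end
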